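(* With $\mathcal{A}$ as in the context, let $n=\log_2(\alpha n_t n_x^\alpha)$ and $\Pi=\mathcal{A}\mathcal{A}^T$. Then $\Pi=\bigotimes_{m=1}^{n}\pi_m$ with each $\pi_m\in\{\rho_0,\rho_3,I_2\}$ (so $\Pi$ is a diagonal $0/1$ matrix), and the matrix $$U_1=\begin{pmatrix}I-\Pi&\Pi\\ \Pi&I-\Pi\end{pmatrix}=\sigma_x\otimes\Pi+I_2\otimes(I-\Pi)$$ is a single multi-controlled NOT gate $C^qX$: it applies $\sigma_x$ to the first (ancilla) qubit conditioned on each qubit $m$ with $\pi_m=\rho_0$ being in state $|0\rangle$ and each qubit $m$ with $\pi_m=\rho_3$ being in state $|1\rangle$, where the number of controls $q=\#\{m:\pi_m\neq I_2\}$ satisfies $q\le\log_2(\alpha n_t n_x^\alpha)$.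
   Context: Single-qubit matrices: $\rho_0=|0\rangle\langle0|$, $\rho_1=|0\rangle\langle1|$, $\rho_2=|1\rangle\langle0|$, $\rho_3=|1\rangle\langle1|$, $\rho_4=I_2$; $\sigma_x$ is the Pauli-X matrix. For $n$ a power of 2, $I_n=I_2^{\otimes\log_2 n}$. Basis convention: index with binary expansion $b_{m-1}\cdots b_0$ corresponds to $|b_{m-1}\rangle\otimes\cdots\otimes|b_0\rangle$. The commutation matrix $K^{(a,b)}$ is the $ab\times ab$ permutation matrix with $K^{(a,b)}(x\otimes y)=y\otimes x$ for $x\in\mathbb{C}^b$, $y\in\mathbb{C}^a$. Standing data: $\alpha,n_t$ powers of 2, $n_x=2^s$ ($s\ge1$), integers $1\le j\le\alpha-1$, $0\le l\le j-1$; $Q_1=\log_2(\alpha n_t n_x^{\alpha}/n_x^{j+1})$; $r_0,\dots,r_{Q_1-1}\in\{0,\dots,4\}$; $P$ a real $n_x^2\times n_x^2$ permutation matrix (in the paper one of two specific permutations $P^\pm$); $\mathcal{D}=\rho_0^{\otimes s}\otimes I_{n_x}$; $$\mathcal{A}=\Bigl(\bigotimes_{k=0}^{Q_1-1}\rho_{r_k}\Bigr)\otimes\Bigl[\bigl(\rho_0^{\otimes s}\otimes K^{(n_x^l,n_x)}\bigr)\bigl(\mathcal{D}P\otimes I_{n_x^l}\bigr)K^{(n_x^2,n_x^l)}\Bigr]\otimes I_{n_x^{j-l-1}}.$$ $U_1$ acts on one ancilla qubit (first tensor factor) together with the $n$ qubits on which $\mathcal{A}$ acts. *)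

theory Defs
  imports "Jordan_Normal_Form.Matrix" "HOL-Combinatorics.Permutations"
begin

(* Kronecker (tensor) product; the first factor is the most significant one,
   matching the basis convention |b_{m-1}> (x) ... (x) |b_0>. *)
definition kron :: "real mat \<Rightarrow> real mat \<Rightarrow> real mat" where
  "kron A B = mat (dim_row A * dim_row B) (dim_col A * dim_col B)
     (\<lambda>(i, j). A $$ (i div dim_row B, j div dim_col B) * B $$ (i mod dim_row B, j mod dim_col B))"

definition kron_list :: "real mat list \<Rightarrow> real mat" where
  "kron_list Ms = foldr kron Ms (1\<^sub>m 1)"

definition kron_pow :: "real mat \<Rightarrow> nat \<Rightarrow> real mat" where
  "kron_pow A k = kron_list (replicate k A)"

(* rho_0 = |0><0|, rho_1 = |0><1|, rho_2 = |1><0|, rho_3 = |1><1|, rho_4 = I_2 *)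
definition rho :: "nat \<Rightarrow> real mat" where
  "rho r = (if r = 4 then 1\<^sub>m 2 else
     mat 2 2 (\<lambda>(i, j). if (i, j) = (r div 2, r mod 2) then 1 else 0))"

definition sigma_x :: "real mat" where
  "sigma_x = mat 2 2 (\<lambda>(i, j). if i \<noteq> j then 1 else 0)"

(* commutation matrix K^(a,b): ab x ab, K (x (x) y) = y (x) x for x in C^b, y in C^a *)
definition commutation_mat :: "nat \<Rightarrow> nat \<Rightarrow> real mat" where
  "commutation_mat a b = mat (a * b) (a * b)
     (\<lambda>(r, c). if c = (r mod b) * a + r div b then 1 else 0)"

definition is_perm_mat :: "nat \<Rightarrow> real mat \<Rightarrow> bool" where
  "is_perm_mat N P \<longleftrightarrow> (\<exists>p. p permutes {..<N} \<and>
      P = mat N N (\<lambda>(i, j). if j = p i then 1 else 0))"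

definition A_mat :: "nat \<Rightarrow> nat \<Rightarrow> nat \<Rightarrow> nat \<Rightarrow> nat list \<Rightarrow> real mat \<Rightarrow> real mat" where
  "A_mat s n_x j l rs P =
     (let D = kron (kron_pow (rho 0) s) (1\<^sub>m n_x);
          M = kron (kron_pow (rho 0) s) (commutation_mat (n_x ^ l) n_x)
              * kron (D * P) (1\<^sub>m (n_x ^ l))
              * commutation_mat (n_x ^ 2) (n_x ^ l)
      in kron (kron (kron_list (map rho rs)) M) (1\<^sub>m (n_x ^ (j - l - 1))))"

definition U1_mat :: "real mat \<Rightarrow> real mat" where
  "U1_mat Proj = (let N = dim_row Proj in
     four_block_mat (1\<^sub>m N - Proj) Proj Proj (1\<^sub>m N - Proj))"

(* Multi-controlled NOT on 1 + n qubits: the ancilla is the first tensor factor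
   (most significant bit of the index), data qubits m = 1..n follow, qubit m being
   bit (n - m) of the data index. ctrl m = Some v: qubit m must be in state |v>;
   ctrl m = None: qubit m is not a control. sigma_x is applied to the ancilla iff all
   control conditions hold. *)
definition mcx_gate :: "nat \<Rightarrow> (nat \<Rightarrow> nat option) \<Rightarrow> real mat" where
  "mcx_gate n ctrl = mat (2 * 2 ^ n) (2 * 2 ^ n) (\<lambda>(i, j).
     (let a = i div 2 ^ n; x = i mod 2 ^ n; b = j div 2 ^ n; y = j mod 2 ^ n;
          fire = (\<forall>m\<in>{1..n}. case ctrl m of None \<Rightarrow> True
                                 | Some v \<Rightarrow> (x div 2 ^ (n - m)) mod 2 = v)
      in if x \<noteq> y then 0
         else if fire then (if a \<noteq> b then 1 else 0)
         else (if a = b then 1 else 0)))"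

(* controls determined by the factors pi_1..pi_n (list index m-1 holds pi_m, given as
   rho-index: 0 = rho_0, 3 = rho_3, 4 = I_2) *)
definition controls_of :: "nat list \<Rightarrow> nat \<Rightarrow> nat option" where
  "controls_of pis m = (if pis ! (m - 1) = 0 then Some 0
                        else if pis ! (m - 1) = 3 then Some 1 else None)"

end

theory Submission
  imports Defs
begin

(* The Gram matrix A A^T is computed factor by factor with the mixed-product rule
   (A \<otimes> B)(C \<otimes> D) = AC \<otimes> BD.  The commutation matrices and P are orthogonal and drop out,
   \<rho>\<^sub>0\<^sup>\<otimes>\<^sup>s is an orthogonal projector, and \<rho>\<^sub>r \<rho>\<^sub>r\<^sup>T \<in> {\<rho>\<^sub>0, \<rho>\<^sub>3, I\<^sub>2}.  So \<Pi> is a Kronecker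
   product of \<rho>\<^sub>0, \<rho>\<^sub>3 and I\<^sub>2, i.e. the diagonal 0/1 matrix selecting exactly the basis states
   whose bits match the pattern (0 under \<rho>\<^sub>0, 1 under \<rho>\<^sub>3). *)

(* One_nat_def would rewrite 1\<^sub>m 1 to 1\<^sub>m (Suc 0) and so block kron_one_left. *)
declare One_nat_def [simp del]

section \<open>Kronecker products\<close>

lemma dim_kron [simp]:
  "dim_row (kron A B) = dim_row A * dim_row B"
  "dim_col (kron A B) = dim_col A * dim_col B"
  by (auto simp: kron_def)

lemma kron_carrier_mat [simp]:
  "A \<in> carrier_mat a b \<Longrightarrow> B \<in> carrier_mat c d \<Longrightarrow> kron A B \<in> carrier_mat (a * c) (b * d)"
  by (intro carrier_matI) auto

lemma index_kron:
  "i < dim_row A * dim_row B \<Longrightarrow> j < dim_col A * dim_col B \<Longrightarrow>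
   kron A B $$ (i, j) = A $$ (i div dim_row B, j div dim_col B) * B $$ (i mod dim_row B, j mod dim_col B)"
  by (auto simp: kron_def)

lemma div_mod_less_mult:
  fixes i :: nat
  assumes "i < a * b"
  shows "i div b < a" and "i mod b < b"
proof -
  show "i div b < a" using assms by (rule less_mult_imp_div_less)
  have "b > 0" using assms by (cases b) simp_all
  then show "i mod b < b" by simp
qed

lemma div_mult_right_eq: "(i::nat) div (b * c) = i div c div b"
  by (simp add: div_mult2_eq mult.commute[of b])

lemma mod_mult_div_eq: "(i::nat) mod (b * c) div c = i div c mod b"
  by (cases "c = 0") (simp_all add: mod_mult2_eq mult.commute[of b])

lemma mod_mult_mod_eq: "(i::nat) mod (b * c) mod c = i mod c"
  by (simp add: mod_mod_cancel)

lemma sum_mult_div_mod: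
  fixes g :: "nat \<Rightarrow> nat \<Rightarrow> 'a :: comm_monoid_add"
  shows "(\<Sum>t = 0..<a * b. g (t div b) (t mod b)) = (\<Sum>i = 0..<a. \<Sum>k = 0..<b. g i k)"
proof -
  have "(\<Sum>t = 0..<a * b. g (t div b) (t mod b)) = (\<Sum>(i, k) \<in> {0..<a} \<times> {0..<b}. g i k)"
  proof (rule sum.reindex_bij_witness[where i = "\<lambda>(i, k). i * b + k" and j = "\<lambda>t. (t div b, t mod b)"])
    fix p assume "p \<in> {0..<a} \<times> {0..<b}"
    then obtain i k where p: "p = (i, k)" "i < a" "k < b" by auto
    have "i * b + k < (i + 1) * b" using p by (simp add: distrib_right)
    also have "\<dots> \<le> a * b" using p by (intro mult_le_mono1) simp
    finally show "(case p of (i, k) \<Rightarrow> i * b + k) \<in> {0..<a * b}" using p by simp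
    show "((case p of (i, k) \<Rightarrow> i * b + k) div b, (case p of (i, k) \<Rightarrow> i * b + k) mod b) = p"
      using p by simp
  next
    fix t assume "t \<in> {0..<a * b}"
    then have "t < a * b" by simp
    then show "(t div b, t mod b) \<in> {0..<a} \<times> {0..<b}" by (simp add: div_mod_less_mult)
  qed simp_all
  then show ?thesis by (simp add: sum.cartesian_product)
qed

lemma kron_mult:
  assumes A: "A \<in> carrier_mat a b" and B: "B \<in> carrier_mat c d"
    and C: "C \<in> carrier_mat b e" and D: "D \<in> carrier_mat d f"
  shows "kron A B * kron C D = kron (A * C) (B * D)"
proof (rule eq_matI)
  fix i k assume "i < dim_row (kron (A * C) (B * D))" and "k < dim_col (kron (A * C) (B * D))"
  then have i: "i < a * c" and k: "k < e * f" using A B C D by auto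
  define g where "g t1 t2 = A $$ (i div c, t1) * C $$ (t1, k div f) * (B $$ (i mod c, t2) * D $$ (t2, k mod f))"
    for t1 t2
  have "(kron A B * kron C D) $$ (i, k) = (\<Sum>t = 0..<b * d. kron A B $$ (i, t) * kron C D $$ (t, k))"
    using A B C D i k by (simp add: scalar_prod_def)
  also have "\<dots> = (\<Sum>t = 0..<b * d. g (t div d) (t mod d))"
  proof (rule sum.cong[OF refl])
    fix t assume "t \<in> {0..<b * d}"
    then show "kron A B $$ (i, t) * kron C D $$ (t, k) = g (t div d) (t mod d)"
      using A B C D i k by (simp add: index_kron g_def)
  qed
  also have "\<dots> = (\<Sum>t1 = 0..<b. \<Sum>t2 = 0..<d. g t1 t2)"
    by (rule sum_mult_div_mod)
  also have "\<dots> = (\<Sum>t1 = 0..<b. A $$ (i div c, t1) * C $$ (t1, k div f))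
      * (\<Sum>t2 = 0..<d. B $$ (i mod c, t2) * D $$ (t2, k mod f))"
    by (simp add: g_def sum_product)
  also have "\<dots> = kron (A * C) (B * D) $$ (i, k)"
    using A B C D i k div_mod_less_mult[OF i] div_mod_less_mult[OF k]
    by (simp add: index_kron scalar_prod_def)
  finally show "(kron A B * kron C D) $$ (i, k) = kron (A * C) (B * D) $$ (i, k)" .
qed (use A B C D in simp_all)

lemma kron_transpose: "transpose_mat (kron A B) = kron (transpose_mat A) (transpose_mat B)"
proof (rule eq_matI)
  fix i j assume "i < dim_row (kron (transpose_mat A) (transpose_mat B))"
    and "j < dim_col (kron (transpose_mat A) (transpose_mat B))"
  then have i: "i < dim_col A * dim_col B" and j: "j < dim_row A * dim_row B" by simp_all
  show "transpose_mat (kron A B) $$ (i, j) = kron (transpose_mat A) (transpose_mat B) $$ (i, j)"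
    using div_mod_less_mult[OF i] div_mod_less_mult[OF j] i j by (simp add: index_kron)
qed simp_all

lemma kron_assoc: "kron (kron A B) C = kron A (kron B C)"
proof (rule eq_matI)
  fix i j assume "i < dim_row (kron A (kron B C))" and "j < dim_col (kron A (kron B C))"
  then have i: "i < dim_row A * dim_row B * dim_row C" "i < dim_row A * (dim_row B * dim_row C)"
    and j: "j < dim_col A * dim_col B * dim_col C" "j < dim_col A * (dim_col B * dim_col C)"
    by (simp_all add: mult.assoc)
  have "i div dim_row C < dim_row A * dim_row B" "j div dim_col C < dim_col A * dim_col B"
    "i mod (dim_row B * dim_row C) < dim_row B * dim_row C" "j mod (dim_col B * dim_col C) < dim_col B * dim_col C"
    using i j by (simp_all add: div_mod_less_mult)
  with i j show "kron (kron A B) C $$ (i, j) = kron A (kron B C) $$ (i, j)"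
    by (simp only: index_kron dim_kron div_mult_right_eq mod_mult_div_eq mod_mult_mod_eq mult.assoc)
qed (simp_all add: mult.assoc)

lemma kron_one_left [simp]: "kron (1\<^sub>m 1) A = A"
  by (rule eq_matI) (auto simp: index_kron)

lemma kron_one_mat [simp]: "kron (1\<^sub>m a) (1\<^sub>m b) = 1\<^sub>m (a * b)"
proof (rule eq_matI)
  fix i j assume "i < dim_row (1\<^sub>m (a * b) :: real mat)" and "j < dim_col (1\<^sub>m (a * b) :: real mat)"
  then have i: "i < a * b" and j: "j < a * b" by simp_all
  have "(i div b = j div b \<and> i mod b = j mod b) = (i = j)"
    by (metis div_mult_mod_eq)
  then show "kron (1\<^sub>m a) (1\<^sub>m b) $$ (i, j) = 1\<^sub>m (a * b) $$ (i, j)"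
    using i j div_mod_less_mult[OF i] div_mod_less_mult[OF j] by (auto simp: index_kron)
qed simp_all

lemma kron_list_Nil [simp]: "kron_list [] = 1\<^sub>m 1"
  by (simp add: kron_list_def)

lemma kron_list_Cons [simp]: "kron_list (M # Ms) = kron M (kron_list Ms)"
  by (simp add: kron_list_def)

lemma kron_list_append: "kron_list (Ms @ Ns) = kron (kron_list Ms) (kron_list Ns)"
  by (induction Ms) (simp_all add: kron_assoc)

lemma kron_list_carrier_mat:
  "set Ms \<subseteq> carrier_mat d d \<Longrightarrow> kron_list Ms \<in> carrier_mat (d ^ length Ms) (d ^ length Ms)"
  by (induction Ms) auto

lemma kron_list_replicate_one_mat: "kron_list (replicate k (1\<^sub>m d)) = 1\<^sub>m (d ^ k)"
  by (induction k) simp_all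

section \<open>Gram matrices\<close>

abbreviation gram :: "real mat \<Rightarrow> real mat" where
  "gram A \<equiv> A * transpose_mat A"

lemma gram_kron: "gram (kron A B) = kron (gram A) (gram B)"
  unfolding kron_transpose by (rule kron_mult) auto

lemma gram_kron_list: "gram (kron_list Ms) = kron_list (map gram Ms)"
  by (induction Ms) (simp_all add: gram_kron)

lemma gram_mult:
  assumes "A \<in> carrier_mat n m" and "B \<in> carrier_mat m k"
  shows "gram (A * B) = A * gram B * transpose_mat A"
proof -
  have At: "transpose_mat A \<in> carrier_mat m n" and Bt: "transpose_mat B \<in> carrier_mat k m"
    using assms by simp_all
  have "gram (A * B) = A * B * (transpose_mat B * transpose_mat A)"
    by (simp add: transpose_mult[OF assms])
  also have "\<dots> = A * (B * (transpose_mat B * transpose_mat A))"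
    using assms At Bt by (intro assoc_mult_mat) auto
  also have "B * (transpose_mat B * transpose_mat A) = gram B * transpose_mat A"
    using assms At Bt by (intro assoc_mult_mat[symmetric]) auto
  also have "A * (gram B * transpose_mat A) = A * gram B * transpose_mat A"
    using assms At Bt by (intro assoc_mult_mat[symmetric]) auto
  finally show ?thesis .
qed

lemma gram_mult_orthogonal:
  assumes "A \<in> carrier_mat n m" and "Q \<in> carrier_mat m m" and "gram Q = 1\<^sub>m m"
  shows "gram (A * Q) = gram A"
  using assms by (simp add: gram_mult)

lemma idem_if_gram_eq_self:
  assumes "gram S = S"
  shows "S * S = S"
proof -
  have "transpose_mat (gram S) = transpose_mat (transpose_mat S) * transpose_mat S"
    by (rule transpose_mult) auto
  then have sym: "transpose_mat S = S"
    using assms by simp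
  show ?thesis
    using assms by (subst (2) sym[symmetric]) simp
qed

definition perm_mat :: "nat \<Rightarrow> (nat \<Rightarrow> nat) \<Rightarrow> real mat" where
  "perm_mat N f = mat N N (\<lambda>(i, j). if j = f i then 1 else 0)"

lemma gram_perm_mat:
  assumes maps: "\<And>i. i < N \<Longrightarrow> f i < N" and inj: "inj_on f {..<N}"
  shows "gram (perm_mat N f) = 1\<^sub>m N"
proof (rule eq_matI)
  fix i k assume "i < dim_row (1\<^sub>m N :: real mat)" and "k < dim_col (1\<^sub>m N :: real mat)"
  then have i: "i < N" and k: "k < N" by simp_all
  have "gram (perm_mat N f) $$ (i, k) = (\<Sum>t = 0..<N. (if t = f i then 1 else 0) * (if t = f k then 1 else 0))"
    using i k by (simp add: perm_mat_def scalar_prod_def)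
  also have "\<dots> = (\<Sum>t = 0..<N. if t = f i then (if f i = f k then 1 else 0) else 0)"
    by (rule sum.cong) auto
  also have "\<dots> = (if f i = f k then 1 else 0)"
    using maps[OF i] by simp
  also have "\<dots> = 1\<^sub>m N $$ (i, k)"
    using i k inj by (auto simp: inj_on_def)
  finally show "gram (perm_mat N f) $$ (i, k) = 1\<^sub>m N $$ (i, k)" .
qed (simp_all add: perm_mat_def)

lemma gram_is_perm_mat:
  assumes "is_perm_mat N P"
  shows "gram P = 1\<^sub>m N"
proof -
  obtain p where p: "p permutes {..<N}" and P: "P = perm_mat N p"
    using assms unfolding is_perm_mat_def perm_mat_def by blast
  show ?thesis
    unfolding P by (rule gram_perm_mat) (use permutes_in_image[OF p] permutes_inj_on[OF p] in auto)
qed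

lemma gram_commutation_mat: "gram (commutation_mat a b) = 1\<^sub>m (a * b)"
proof -
  define f where "f r = r mod b * a + r div b" for r
  have f_div: "f r div a = r mod b" and f_mod: "f r mod a = r div b" if r: "r < a * b" for r
    using div_mod_less_mult(1)[OF r] by (simp_all add: f_def)
  have "f r < a * b" if r: "r < a * b" for r
  proof -
    have "f r < (r mod b + 1) * a"
      using div_mod_less_mult(1)[OF r] by (simp add: f_def distrib_right)
    also have "\<dots> \<le> b * a"
      using div_mod_less_mult(2)[OF r] by (intro mult_le_mono1) simp
    finally show ?thesis by (simp add: mult.commute)
  qed
  moreover have "inj_on f {..<a * b}"
  proof (rule inj_onI)
    fix x y assume "x \<in> {..<a * b}" "y \<in> {..<a * b}" and "f x = f y"
    then have "x mod b = y mod b" and "x div b = y div b"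
      using f_div f_mod by (metis lessThan_iff)+
    then show "x = y" by (metis div_mult_mod_eq)
  qed
  moreover have "commutation_mat a b = perm_mat (a * b) f"
    by (simp add: commutation_mat_def perm_mat_def f_def)
  ultimately show ?thesis by (simp add: gram_perm_mat)
qed

section \<open>The Gram matrix of \<open>A_mat\<close>\<close>

lemma rho_carrier_mat [simp]: "rho r \<in> carrier_mat 2 2"
  by (simp add: rho_def)

lemma rho_4: "rho 4 = 1\<^sub>m 2"
  by (simp add: rho_def)

text \<open>The Gram matrix of \<open>|a\<rangle>\<langle>b|\<close> is \<open>|a\<rangle>\<langle>a|\<close>.\<close>

definition rho_gram_index :: "nat \<Rightarrow> nat" where
  "rho_gram_index r = (if r \<le> 1 then 0 else if r \<le> 3 then 3 else 4)"

lemma gram_rho: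
  assumes "r \<le> 4"
  shows "gram (rho r) = rho (rho_gram_index r)"
proof -
  have sum_2: "(\<Sum>i = 0..<2. f i) = f 0 + f 1" for f :: "nat \<Rightarrow> real"
    by (simp add: numeral_2_eq_2 One_nat_def)
  have "r = 0 \<or> r = 1 \<or> r = 2 \<or> r = 3 \<or> r = 4" using assms by auto
  then show ?thesis
    by (elim disjE; hypsubst; intro eq_matI)
      (auto simp: rho_def rho_gram_index_def scalar_prod_def less_2_cases_iff sum_2)
qed

lemma gram_kron_pow_rho_0: "gram (kron_pow (rho 0) s) = kron_pow (rho 0) s"
  using gram_rho[of 0] by (simp add: kron_pow_def gram_kron_list rho_gram_index_def)

lemma gram_A_block:
  fixes S P :: "real mat"
  assumes S: "S \<in> carrier_mat N N" and S_proj: "gram S = S"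
    and P: "P \<in> carrier_mat (N * N) (N * N)" and P_orth: "gram P = 1\<^sub>m (N * N)"
  shows "gram (kron S (commutation_mat (N ^ l) N) * kron (kron S (1\<^sub>m N) * P) (1\<^sub>m (N ^ l))
      * commutation_mat (N ^ 2) (N ^ l)) = kron S (1\<^sub>m (N ^ l * N))"
proof -
  define T where "T = N * (N ^ l * N)"
  let ?K1 = "commutation_mat (N ^ l) N" and ?K2 = "commutation_mat (N ^ 2) (N ^ l)"
  let ?D = "kron S (1\<^sub>m N)"
  let ?X = "kron S ?K1" and ?Y = "kron (?D * P) (1\<^sub>m (N ^ l))"
  have K1: "?K1 \<in> carrier_mat (N ^ l * N) (N ^ l * N)"
    by (simp add: commutation_mat_def)
  have X: "?X \<in> carrier_mat T T"
    unfolding T_def using S K1 by simp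
  have DP: "?D * P \<in> carrier_mat (N * N) (N * N)"
    by (rule mult_carrier_mat[OF kron_carrier_mat[OF S one_carrier_mat] P])
  have Y: "?Y \<in> carrier_mat T T"
    using kron_carrier_mat[OF DP one_carrier_mat[of "N ^ l"]] by (simp add: T_def mult_ac)
  have K2: "?K2 \<in> carrier_mat T T"
    by (simp add: commutation_mat_def T_def power2_eq_square mult_ac)
  have gram_Y: "gram ?Y = kron S (1\<^sub>m (N ^ l * N))"
    using gram_mult_orthogonal[OF _ P P_orth, of ?D "N * N"] S
    by (simp add: gram_kron S_proj kron_assoc mult.commute)
  have X_gram_Y: "?X * gram ?Y = ?X"
  proof -
    have "?X * gram ?Y = kron (S * S) (?K1 * 1\<^sub>m (N ^ l * N))"
      unfolding gram_Y using S K1 by (intro kron_mult) auto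
    also have "\<dots> = ?X"
      using K1 by (simp add: idem_if_gram_eq_self[OF S_proj])
    finally show ?thesis .
  qed
  have "gram (?X * ?Y * ?K2) = gram (?X * ?Y)"
    using X Y K2 gram_commutation_mat[of "N ^ 2" "N ^ l"]
    by (intro gram_mult_orthogonal[of _ T T]) (auto simp: T_def power2_eq_square mult_ac)
  also have "\<dots> = ?X * gram ?Y * transpose_mat ?X"
    by (rule gram_mult[OF X Y])
  also have "\<dots> = gram ?X"
    unfolding X_gram_Y ..
  also have "\<dots> = kron S (1\<^sub>m (N ^ l * N))"
    by (simp add: gram_kron S_proj gram_commutation_mat)
  finally show ?thesis .
qed

lemma gram_A_mat:
  assumes n_x: "n_x = 2 ^ s" and "l < j"
    and P: "P \<in> carrier_mat (n_x ^ 2) (n_x ^ 2)" "is_perm_mat (n_x ^ 2) P"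
    and rs: "\<forall>r\<in>set rs. r \<le> 4"
  shows "gram (A_mat s n_x j l rs P)
    = kron_list (map rho (map rho_gram_index rs @ replicate s 0 @ replicate (s * j) 4))"
proof -
  let ?S = "kron_pow (rho 0) s"
  have S: "?S \<in> carrier_mat n_x n_x"
  proof -
    have "set (replicate s (rho 0)) \<subseteq> carrier_mat 2 2"
      by auto
    from kron_list_carrier_mat[OF this] show ?thesis
      by (simp add: kron_pow_def n_x)
  qed
  have gram_core: "gram (kron ?S (commutation_mat (n_x ^ l) n_x) * kron (kron ?S (1\<^sub>m n_x) * P) (1\<^sub>m (n_x ^ l))
      * commutation_mat (n_x ^ 2) (n_x ^ l)) = kron ?S (1\<^sub>m (n_x ^ l * n_x))"
    using P gram_is_perm_mat[OF P(2)]
    by (intro gram_A_block[OF S gram_kron_pow_rho_0]) (simp_all add: power2_eq_square)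
  have "map gram (map rho rs) = map rho (map rho_gram_index rs)"
    unfolding map_map using rs by (intro map_cong) (auto simp: gram_rho)
  then have gram_R: "gram (kron_list (map rho rs)) = kron_list (map rho (map rho_gram_index rs))"
    by (simp only: gram_kron_list)
  have "l + 1 + (j - (l + 1)) = j"
    using \<open>l < j\<close> by simp
  then have "n_x ^ l * n_x * n_x ^ (j - (l + 1)) = n_x ^ j"
    by (metis power_add power_one_right)
  then have dims: "n_x ^ l * n_x * n_x ^ (j - (l + 1)) = 2 ^ (s * j)"
    by (simp add: n_x power_mult)
  show ?thesis
    unfolding A_mat_def Let_def gram_kron gram_R gram_core
    by (simp add: kron_list_append kron_assoc kron_pow_def dims rho_4 kron_list_replicate_one_mat)
qed

lemma qubit_count:
  fixes \<alpha> n_t n_x s j Q1 n :: nat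
  assumes n_x: "n_x = 2 ^ s" and "j + 1 \<le> \<alpha>"
    and Q1: "2 ^ Q1 = \<alpha> * n_t * n_x ^ \<alpha> div n_x ^ (j + 1)" and n: "2 ^ n = \<alpha> * n_t * n_x ^ \<alpha>"
  shows "Q1 + s * (j + 1) = n"
proof -
  have pow_split: "n_x ^ \<alpha> = n_x ^ (\<alpha> - (j + 1)) * n_x ^ (j + 1)"
    using \<open>j + 1 \<le> \<alpha>\<close> by (simp flip: power_add)
  have "(2::nat) ^ (Q1 + s * (j + 1)) = 2 ^ Q1 * n_x ^ (j + 1)"
    by (simp add: n_x power_add power_mult)
  also have "\<dots> = 2 ^ n"
    unfolding Q1 n pow_split by (simp add: n_x mult.assoc)
  finally show ?thesis
    by simp
qed

section \<open>Diagonal projectors and multi-controlled NOT gates\<close>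

definition diag_proj :: "nat \<Rightarrow> (nat \<Rightarrow> bool) \<Rightarrow> real mat" where
  "diag_proj N F = mat N N (\<lambda>(i, j). if i = j \<and> F i then 1 else 0)"

lemma diag_proj_carrier_mat [simp]: "diag_proj N F \<in> carrier_mat N N"
  by (simp add: diag_proj_def)

lemma dim_diag_proj [simp]: "dim_row (diag_proj N F) = N" "dim_col (diag_proj N F) = N"
  by (simp_all add: diag_proj_def)

lemma diagonal_diag_proj: "diagonal_mat (diag_proj N F)"
  by (simp add: diagonal_mat_def diag_proj_def)

lemma diag_proj_diag_entries: "\<forall>i < dim_row (diag_proj N F). diag_proj N F $$ (i, i) \<in> {0, 1}"
  by (simp add: diag_proj_def)

lemma diag_proj_cong: "(\<And>x. x < N \<Longrightarrow> F x = G x) \<Longrightarrow> diag_proj N F = diag_proj N G"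
  by (auto simp: diag_proj_def intro!: cong_mat)

lemma kron_diag_proj:
  "kron (diag_proj a F) (diag_proj b G) = diag_proj (a * b) (\<lambda>x. F (x div b) \<and> G (x mod b))"
proof (rule eq_matI)
  fix i j assume "i < dim_row (diag_proj (a * b) (\<lambda>x. F (x div b) \<and> G (x mod b)))"
    and "j < dim_col (diag_proj (a * b) (\<lambda>x. F (x div b) \<and> G (x mod b)))"
  then have i: "i < a * b" and j: "j < a * b" by (simp_all add: diag_proj_def)
  have "(i div b = j div b \<and> i mod b = j mod b) = (i = j)"
    by (metis div_mult_mod_eq)
  then show "kron (diag_proj a F) (diag_proj b G) $$ (i, j) = diag_proj (a * b) (\<lambda>x. F (x div b) \<and> G (x mod b)) $$ (i, j)"
    using i j div_mod_less_mult[OF i] div_mod_less_mult[OF j]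
    by (auto simp: index_kron diag_proj_def)
qed (simp_all add: diag_proj_def)

lemma rho_eq_diag_proj:
  "p \<in> {0, 3, 4} \<Longrightarrow> rho p = diag_proj 2 (\<lambda>v. (p = 0 \<longrightarrow> v = 0) \<and> (p = 3 \<longrightarrow> v = 1))"
  by (auto simp: rho_def diag_proj_def less_2_cases_iff intro!: eq_matI)

definition controls_fire :: "nat \<Rightarrow> (nat \<Rightarrow> nat option) \<Rightarrow> nat \<Rightarrow> bool" where
  "controls_fire n ctrl x \<longleftrightarrow>
     (\<forall>m\<in>{1..n}. case ctrl m of None \<Rightarrow> True | Some v \<Rightarrow> x div 2 ^ (n - m) mod 2 = v)"

lemma controls_fire_0 [simp]: "controls_fire 0 ctrl x"
  by (simp add: controls_fire_def)

lemma controls_fire_cong: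
  "(\<And>m. m \<in> {1..n} \<Longrightarrow> ctrl m = ctrl' m) \<Longrightarrow> controls_fire n ctrl = controls_fire n ctrl'"
  by (auto simp: controls_fire_def fun_eq_iff)

lemma bit_mod_pow2: "e < k \<Longrightarrow> (x :: nat) mod 2 ^ k div 2 ^ e mod 2 = x div 2 ^ e mod 2"
proof -
  assume "e < k"
  then have "(2::nat) ^ k = 2 ^ (k - e) * 2 ^ e" and "(2::nat) dvd 2 ^ (k - e)"
    by (simp_all flip: power_add)
  then show ?thesis
    by (simp add: mod_mult_div_eq mod_mod_cancel)
qed

lemma controls_fire_Suc:
  assumes x: "x < 2 * 2 ^ n"
  shows "controls_fire (Suc n) ctrl x \<longleftrightarrow>
    (case ctrl 1 of None \<Rightarrow> True | Some v \<Rightarrow> x div 2 ^ n = v)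
    \<and> controls_fire n (\<lambda>m. ctrl (Suc m)) (x mod 2 ^ n)"
proof -
  have top: "x div 2 ^ (Suc n - 1) mod 2 = x div 2 ^ n"
    using div_mod_less_mult(1)[OF x] by (simp add: One_nat_def)
  have low: "x div 2 ^ (Suc n - Suc m) mod 2 = x mod 2 ^ n div 2 ^ (n - m) mod 2" if "m \<in> {1..n}" for m
    using that by (simp add: bit_mod_pow2)
  have ball: "(\<forall>m\<in>{1..Suc n}. Q m) \<longleftrightarrow> Q 1 \<and> (\<forall>m\<in>{1..n}. Q (Suc m))" for Q
  proof -
    have "m = 1 \<or> m - 1 \<in> {1..n} \<and> m = Suc (m - 1)" if "m \<in> {1..Suc n}" for m
      using that by auto
    then show ?thesis by fastforce
  qed
  show ?thesis
    unfolding controls_fire_def ball using top low by (simp cong: option.case_cong)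
qed

lemma kron_list_rho_eq_diag_proj:
  "set pis \<subseteq> {0, 3, 4} \<Longrightarrow>
   kron_list (map rho pis) = diag_proj (2 ^ length pis) (controls_fire (length pis) (controls_of pis))"
proof (induction pis)
  case Nil
  show ?case
    by (auto simp: diag_proj_def intro!: eq_matI)
next
  case (Cons p ps)
  let ?k = "length ps"
  have shift: "controls_fire ?k (\<lambda>m. controls_of (p # ps) (Suc m)) = controls_fire ?k (controls_of ps)"
    by (rule controls_fire_cong) (auto simp: controls_of_def)
  have head: "controls_of (p # ps) 1 = (if p = 0 then Some 0 else if p = 3 then Some 1 else None)"
    by (simp add: controls_of_def)
  have "kron_list (map rho (p # ps))
      = diag_proj (2 * 2 ^ ?k) (\<lambda>x. ((p = 0 \<longrightarrow> x div 2 ^ ?k = 0) \<and> (p = 3 \<longrightarrow> x div 2 ^ ?k = 1))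
          \<and> controls_fire ?k (controls_of ps) (x mod 2 ^ ?k))"
    using Cons by (simp add: rho_eq_diag_proj kron_diag_proj)
  also have "\<dots> = diag_proj (2 * 2 ^ ?k) (controls_fire (Suc ?k) (controls_of (p # ps)))"
    by (intro diag_proj_cong) (auto simp: controls_fire_Suc shift head)
  finally show ?case
    by simp
qed

lemma U1_mat_eq_kron:
  assumes "Proj \<in> carrier_mat N N"
  shows "U1_mat Proj = kron sigma_x Proj + kron (1\<^sub>m 2) (1\<^sub>m (dim_row Proj) - Proj)"
proof (rule eq_matI)
  fix i j assume "i < dim_row (kron sigma_x Proj + kron (1\<^sub>m 2) (1\<^sub>m (dim_row Proj) - Proj))"
    and "j < dim_col (kron sigma_x Proj + kron (1\<^sub>m 2) (1\<^sub>m (dim_row Proj) - Proj))"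
  then have i: "i < 2 * N" and j: "j < 2 * N"
    using assms by (simp_all add: sigma_x_def)
  have halves: "x div N = (if x < N then 0 else 1) \<and> x mod N = (if x < N then x else x - N)" if "x < 2 * N" for x
    using that by (auto simp: div_if mod_if)
  show "U1_mat Proj $$ (i, j) = (kron sigma_x Proj + kron (1\<^sub>m 2) (1\<^sub>m (dim_row Proj) - Proj)) $$ (i, j)"
    using assms i j halves[OF i] halves[OF j]
    by (cases "i < N"; cases "j < N") (auto simp: U1_mat_def sigma_x_def index_kron)
qed (use assms in \<open>auto simp: U1_mat_def sigma_x_def\<close>)

lemma mcx_gate_eq_kron:
  fixes n :: nat and ctrl :: "nat \<Rightarrow> nat option"
  defines "Proj \<equiv> diag_proj (2 ^ n) (controls_fire n ctrl)"
  shows "mcx_gate n ctrl = kron sigma_x Proj + kron (1\<^sub>m 2) (1\<^sub>m (2 ^ n) - Proj)"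
proof (rule eq_matI)
  fix i j assume "i < dim_row (kron sigma_x Proj + kron (1\<^sub>m 2) (1\<^sub>m (2 ^ n) - Proj))"
    and "j < dim_col (kron sigma_x Proj + kron (1\<^sub>m 2) (1\<^sub>m (2 ^ n) - Proj))"
  then have i: "i < 2 * 2 ^ n" and j: "j < 2 * 2 ^ n"
    by (simp_all add: Proj_def sigma_x_def)
  show "mcx_gate n ctrl $$ (i, j) = (kron sigma_x Proj + kron (1\<^sub>m 2) (1\<^sub>m (2 ^ n) - Proj)) $$ (i, j)"
    using i j div_mod_less_mult[OF i] div_mod_less_mult[OF j]
    by (auto simp: mcx_gate_def Proj_def diag_proj_def controls_fire_def sigma_x_def index_kron Let_def)
qed (simp_all add: mcx_gate_def Proj_def sigma_x_def)

theorem theorem3: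
  fixes \<alpha> n_t n_x s j l Q1 n :: nat and rs :: "nat list" and P :: "real mat"
  assumes "\<exists>a. \<alpha> = 2 ^ a" and "\<exists>b. n_t = 2 ^ b"
    and "n_x = 2 ^ s" and "s \<ge> 1"
    and "1 \<le> j" and "j \<le> \<alpha> - 1" and "l \<le> j - 1"
    and "2 ^ Q1 = \<alpha> * n_t * n_x ^ \<alpha> div n_x ^ (j + 1)"
    and "length rs = Q1" and "\<forall>r\<in>set rs. r \<le> 4"
    and "P \<in> carrier_mat (n_x ^ 2) (n_x ^ 2)" and "is_perm_mat (n_x ^ 2) P"
    and "2 ^ n = \<alpha> * n_t * n_x ^ \<alpha>"
  shows "let Proj = A_mat s n_x j l rs P * transpose_mat (A_mat s n_x j l rs P) in
    \<exists>pis :: nat list. length pis = n \<and> set pis \<subseteq> {0, 3, 4}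
      \<and> Proj = kron_list (map rho pis)
      \<and> diagonal_mat Proj \<and> (\<forall>i < dim_row Proj. Proj $$ (i, i) \<in> {0, 1})
      \<and> U1_mat Proj = kron sigma_x Proj + kron (1\<^sub>m 2) (1\<^sub>m (dim_row Proj) - Proj)
      \<and> U1_mat Proj = mcx_gate n (controls_of pis)
      \<and> card {m \<in> {1..n}. pis ! (m - 1) \<noteq> 4} \<le> n"
proof -
  define pis where "pis = map rho_gram_index rs @ replicate s 0 @ replicate (s * j) 4"
  have len: "length pis = n"
    using qubit_count[OF assms(3) _ assms(8) assms(13)] assms(5,6,9)
    by (simp add: pis_def algebra_simps)
  have set: "set pis \<subseteq> {0, 3, 4}"
    by (auto simp: pis_def rho_gram_index_def)
  have Proj: "gram (A_mat s n_x j l rs P) = kron_list (map rho pis)"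
    unfolding pis_def using assms by (intro gram_A_mat) auto
  have diag: "kron_list (map rho pis) = diag_proj (2 ^ n) (controls_fire n (controls_of pis))"
    using kron_list_rho_eq_diag_proj[OF set] len by simp
  have "card {m \<in> {1..n}. pis ! (m - 1) \<noteq> 4} \<le> card {1..n}"
    by (rule card_mono) auto
  then have card: "card {m \<in> {1..n}. pis ! (m - 1) \<noteq> 4} \<le> n"
    by simp
  show ?thesis
    unfolding Let_def Proj diag
    using len set card diagonal_diag_proj diag_proj_diag_entries
      U1_mat_eq_kron[OF diag_proj_carrier_mat] mcx_gate_eq_kron[of n "controls_of pis"]
    by (intro exI[of _ pis]) (simp add: diag)
qed

end
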